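(* Let $r_0>0$, $\kappa\in\mathbb R$, $F,h\in C^\infty([0,\infty);\mathbb R)$ with $F(r_0^2)=F'(r_0^2)=0$. Suppose that either (1) there is $r\ge0$ with $F(r^2)<0$, or (2) there is $r\ge0$ with $1+2\kappa r^2h'(r^2)^2<0$. Then for every $\mathfrak p\in\mathbb R$ there exists a sequence $(v_n)\subset\mathcal X(\mathbb R)$ with $\inf_{\mathbb R}|v_n|>0$, $P(v_n)=\mathfrak p$ for all $n$, and $E_\kappa(v_n)\to-\infty$.
   Context: $\mathcal X(\mathbb R)=\{v\in H^1_{loc}(\mathbb R;\mathbb C):v'\in L^2(\mathbb R),\ |v|^2-r_0^2\in L^2(\mathbb R)\}$. $E_\kappa(v)=\int_{\mathbb R}\big(|v'|^2+F(|v|^2)+\frac\kappa2|(h(|v|^2))'|^2\big)dx$. For $v\in\mathcal X(\mathbb R)$ with $\inf|v|>0$, $P(v)=\int_{\mathbb R}\mathrm{Re}(iv'\bar v)\big(1-\frac{r_0^2}{|v|^2}\big)dx$. *)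

theory Defs
  imports "HOL-Analysis.Analysis"
begin

definition smooth_nonneg :: "(real \<Rightarrow> real) \<Rightarrow> bool" where
  "smooth_nonneg f \<longleftrightarrow> (\<exists>D. D 0 = f \<and>
     (\<forall>k x. 0 \<le> x \<longrightarrow> (D k has_real_derivative D (Suc k) x) (at x within {0..})))"

text \<open>w is the (weak) derivative of the locally absolutely continuous function v:
  v is the continuous H^1_loc representative, w locally integrable, v b - v a = integral of w.\<close>
definition H1loc_deriv :: "(real \<Rightarrow> 'a::{banach,second_countable_topology}) \<Rightarrow> (real \<Rightarrow> 'a) \<Rightarrow> bool" where
  "H1loc_deriv v w \<longleftrightarrow> w \<in> borel_measurable lborel \<and>
     (\<forall>a b. a \<le> b \<longrightarrow> set_integrable lborel {a..b} w \<and>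
        v b - v a = (LINT x:{a..b}|lborel. w x))"

definition in_X :: "real \<Rightarrow> (real \<Rightarrow> complex) \<Rightarrow> (real \<Rightarrow> complex) \<Rightarrow> bool" where
  "in_X r0 v w \<longleftrightarrow> H1loc_deriv v w \<and>
     integrable lborel (\<lambda>x. (cmod (w x))\<^sup>2) \<and>
     (\<lambda>x. (cmod (v x))\<^sup>2 - r0\<^sup>2) \<in> borel_measurable lborel \<and>
     integrable lborel (\<lambda>x. ((cmod (v x))\<^sup>2 - r0\<^sup>2)\<^sup>2)"

text \<open>Energy integrand; w = v', g = (h(|v|^2))'.\<close>
definition E_dens :: "real \<Rightarrow> (real \<Rightarrow> real) \<Rightarrow> (real \<Rightarrow> complex) \<Rightarrow> (real \<Rightarrow> complex)
    \<Rightarrow> (real \<Rightarrow> real) \<Rightarrow> real \<Rightarrow> real" where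
  "E_dens \<kappa> F v w g x = (cmod (w x))\<^sup>2 + F ((cmod (v x))\<^sup>2) + \<kappa> / 2 * (g x)\<^sup>2"

definition E_kappa :: "real \<Rightarrow> (real \<Rightarrow> real) \<Rightarrow> (real \<Rightarrow> complex) \<Rightarrow> (real \<Rightarrow> complex)
    \<Rightarrow> (real \<Rightarrow> real) \<Rightarrow> real" where
  "E_kappa \<kappa> F v w g = (LINT x|lborel. E_dens \<kappa> F v w g x)"

definition P_dens :: "real \<Rightarrow> (real \<Rightarrow> complex) \<Rightarrow> (real \<Rightarrow> complex) \<Rightarrow> real \<Rightarrow> real" where
  "P_dens r0 v w x = Re (\<i> * w x * cnj (v x)) * (1 - r0\<^sup>2 / (cmod (v x))\<^sup>2)"

definition P_mom :: "real \<Rightarrow> (real \<Rightarrow> complex) \<Rightarrow> (real \<Rightarrow> complex) \<Rightarrow> real" where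
  "P_mom r0 v w = (LINT x|lborel. P_dens r0 v w x)"

end

theory Submission
  imports Defs
begin

text \<open>
  The competitors are twisted plateaus v = \<rho> e^(i\<theta>). The modulus \<rho> leaves r0, stays near some
  r1 \<noteq> r0 on an interval [0, T], where it oscillates as r1 + \<epsilon> sin (m x), and comes back; the
  phase \<theta> turns at constant speed c on [0, T] only. The momentum is then
  -c T (r1^2 - r0^2 + \<epsilon>^2/2), which for r1 \<noteq> r0 and small \<epsilon> equals any prescribed p for a
  suitable c, and the energy is at most a bounded transition cost plus the integral over [0, T] of
  \<rho>'^2 (1 + 2 \<kappa> \<rho>^2 h'(\<rho>^2)^2) + \<rho>^2 c^2 + F(\<rho>^2).

  If F(r1^2) < 0, take \<epsilon> = 0 and let T \<rightarrow> \<infinity>: the kinetic part T r1^2 c^2 is O(1/T), while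
  T F(r1^2) \<rightarrow> -\<infinity>. If 1 + 2 \<kappa> r1^2 h'(r1^2)^2 < 0, fix T = 2\<pi> and let m \<rightarrow> \<infinity>: then
  \<rho>'^2 = \<epsilon>^2 m^2 cos^2 (m x) is weighted by a negative coefficient and the energy decreases
  like -m^2. In both cases a suitable r1 > 0 is found by continuity near the point r given by
  the hypothesis.
\<close>

lemma clamp_real: "clamp a b x = (if a \<le> b then max a (min b x) else (a::real))"
  unfolding clamp_def Basis_real_def by auto

lemma continuous_on_clamp_real [continuous_intros]:
  "continuous_on S f \<Longrightarrow> continuous_on S (\<lambda>x. clamp a b (f x :: real))"
  unfolding clamp_real by (cases "a \<le> b") (auto intro!: continuous_intros)

lemma has_real_derivative_clamp:
  assumes "a < b" "x \<noteq> a" "x \<noteq> b"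
  shows "(clamp a b has_real_derivative indicator {a<..<b} x) (at x)"
proof -
  have clamp: "clamp a b = (\<lambda>x. max a (min b x))"
    using assms(1) by (simp add: clamp_real fun_eq_iff)
  consider "x < a" | "a < x" "x < b" | "b < x"
    using assms by linarith
  then have "((\<lambda>x. max a (min b x)) has_real_derivative indicator {a<..<b} x) (at x)"
  proof cases
    case 1
    show ?thesis
      by (rule has_field_derivative_transform_within_open[where f="\<lambda>_. a" and S="{..<a}"])
         (use 1 assms in \<open>auto simp: indicator_def\<close>)
  next
    case 2
    show ?thesis
      by (rule has_field_derivative_transform_within_open[where f="\<lambda>x. x" and S="{a<..<b}"])
         (use 2 in \<open>auto simp: indicator_def\<close>)
  next
    case 3
    show ?thesis
      by (rule has_field_derivative_transform_within_open[where f="\<lambda>_. b" and S="{b<..}"])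
         (use 3 assms in \<open>auto simp: indicator_def\<close>)
  qed
  then show ?thesis
    by (simp add: clamp)
qed

lemma has_real_derivative_clamp_compose [derivative_intros]:
  assumes "(f has_real_derivative f') (at x)" "a < b" "f x \<noteq> a" "f x \<noteq> b"
  shows "((\<lambda>x. clamp a b (f x)) has_real_derivative indicator {a<..<b} (f x) * f') (at x)"
  using DERIV_chain2[OF has_real_derivative_clamp assms(1)] assms(2-4) by simp

lemma H1loc_deriv_piecewise_C1:
  fixes f :: "real \<Rightarrow> 'a::euclidean_space"
  assumes "finite S" and "continuous_on UNIV f"
    and "\<And>x. x \<notin> S \<Longrightarrow> (f has_vector_derivative f' x) (at x)"
    and "f' \<in> borel_measurable borel" and "\<And>x. norm (f' x) \<le> B"
  shows "H1loc_deriv f f'"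
  unfolding H1loc_deriv_def
proof (intro conjI allI impI)
  show "f' \<in> borel_measurable lborel"
    using assms(4) by simp
  fix a b :: real
  assume "a \<le> b"
  show integrable: "set_integrable lborel {a..b} f'"
    unfolding set_integrable_def
  proof (rule Bochner_Integration.integrable_bound)
    show "integrable lborel (\<lambda>x. B * indicator {a..b} x)"
      by (intro integrable_mult_right integrable_real_indicator) (auto simp: emeasure_lborel_Icc_eq)
    show "(\<lambda>x. indicator {a..b} x *\<^sub>R f' x) \<in> borel_measurable lborel"
      using assms(4) by measurable
    show "AE x in lborel. norm (indicator {a..b} x *\<^sub>R f' x) \<le> norm (B * indicator {a..b} x)"
      using assms(5) by (auto simp: indicator_def intro: order_trans[OF _ abs_ge_self])
  qed
  have "(f' has_integral f b - f a) {a..b}"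
    using \<open>a \<le> b\<close> assms(1,2,3)
    by (intro fundamental_theorem_of_calculus_interior_strong[of S])
       (auto intro: continuous_on_subset)
  then show "f b - f a = set_lebesgue_integral lborel {a..b} f'"
    by (simp add: set_borel_integral_eq_integral[OF integrable] integral_unique)
qed

lemma integrable_bounded_Icc_support:
  fixes f :: "real \<Rightarrow> real"
  assumes "f \<in> borel_measurable borel" and "\<And>x. \<bar>f x\<bar> \<le> B"
    and "\<And>x. x \<notin> {a..b} \<Longrightarrow> f x = 0"
  shows "integrable lborel f"
proof (rule Bochner_Integration.integrable_bound)
  show "integrable lborel (\<lambda>x. B * indicator {a..b} x)"
    by (intro integrable_mult_right integrable_real_indicator) (auto simp: emeasure_lborel_Icc_eq)
  show "f \<in> borel_measurable lborel"
    using assms(1) by simp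
  show "AE x in lborel. norm (f x) \<le> norm (B * indicator {a..b} x)"
    using assms(2,3) by (auto simp: indicator_def intro: order_trans[OF _ abs_ge_self])
qed

lemma integral_indicator_Ioo_FTC:
  fixes q Q :: "real \<Rightarrow> real"
  assumes "a \<le> b" and "continuous_on UNIV q"
    and "\<And>x. (Q has_real_derivative q x) (at x)"
  shows "integrable lborel (\<lambda>x. indicator {a<..<b} x * q x)"
    and "(LINT x|lborel. indicator {a<..<b} x * q x) = Q b - Q a"
proof -
  obtain B where B: "\<And>x. x \<in> {a..b} \<Longrightarrow> norm (q x) \<le> B"
    using continuous_on_compact_bound[OF compact_Icc[of a b] continuous_on_subset[OF assms(2) subset_UNIV]]
    by blast
  show "integrable lborel (\<lambda>x. indicator {a<..<b} x * q x)"
  proof (rule integrable_bounded_Icc_support[where B=B and a=a and b=b])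
    show "(\<lambda>x. indicator {a<..<b} x * q x) \<in> borel_measurable borel"
      using borel_measurable_continuous_onI[OF assms(2)] by measurable
    show "\<bar>indicator {a<..<b} x * q x\<bar> \<le> B" for x
      using B[of x] B[of a] assms(1) by (auto simp: indicator_def)
  qed (auto simp: indicator_def)
  have "(LBINT x=a..b. q x) = Q b - Q a"
    using assms
    by (intro interval_integral_FTC_finite)
       (auto intro: continuous_on_subset has_field_derivative_at_within
          simp flip: has_real_derivative_iff_has_vector_derivative)
  then show "(LINT x|lborel. indicator {a<..<b} x * q x) = Q b - Q a"
    using assms(1)
    by (simp add: interval_lebesgue_integral_def einterval_eq_Icc set_lebesgue_integral_def)
qed

lemma integral_trig_polynomial_over_period:
  fixes a b d m T :: real
  assumes "0 < m" "0 \<le> T" "sin (m * T) = 0" "cos (m * T) = 1"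
  shows "integrable lborel (\<lambda>x. indicator {0<..<T} x * (a + b * sin (m * x) + d * (sin (m * x))\<^sup>2))"
    and "(LINT x|lborel. indicator {0<..<T} x * (a + b * sin (m * x) + d * (sin (m * x))\<^sup>2))
           = a * T + d * T / 2"
proof -
  define Q where "Q x = a * x - b * cos (m * x) / m + d * (x / 2 - sin (2 * m * x) / (4 * m))" for x
  have Q: "(Q has_real_derivative a + b * sin (m * x) + d * (sin (m * x))\<^sup>2) (at x)" for x
  proof -
    have cos_double: "cos (m * (x * 2)) = 1 - 2 * (sin (m * x))\<^sup>2"
      using cos_double_sin[of "m * x"] by (simp add: mult_ac)
    show ?thesis
      unfolding Q_def using \<open>0 < m\<close>
      by (auto intro!: derivative_eq_intros simp: cos_double field_simps power2_eq_square)
  qed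
  have continuous: "continuous_on UNIV (\<lambda>x. a + b * sin (m * x) + d * (sin (m * x))\<^sup>2)"
    by (intro continuous_intros)
  show "integrable lborel (\<lambda>x. indicator {0<..<T} x * (a + b * sin (m * x) + d * (sin (m * x))\<^sup>2))"
    by (rule integral_indicator_Ioo_FTC(1)[OF \<open>0 \<le> T\<close> continuous Q])
  have "sin (2 * m * T) = 0"
    using sin_double[of "m * T"] assms(3) by (simp add: mult.assoc)
  then have "Q T - Q 0 = a * T + d * T / 2"
    using assms(4) by (simp add: Q_def)
  then show "(LINT x|lborel. indicator {0<..<T} x * (a + b * sin (m * x) + d * (sin (m * x))\<^sup>2))
           = a * T + d * T / 2"
    using integral_indicator_Ioo_FTC(2)[OF \<open>0 \<le> T\<close> continuous Q] by simp
qed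

lemma continuous_negative_near_avoiding:
  fixes \<phi> :: "real \<Rightarrow> real"
  assumes "continuous_on {0..} \<phi>" "0 \<le> r" "\<phi> r < 0" "0 < a"
  obtains r1 \<eta> where "0 < \<eta>" "\<eta> < r1" "\<eta> < a" "r1 \<noteq> a"
    "\<And>s. s \<in> {r1 - \<eta>..r1 + \<eta>} \<Longrightarrow> \<phi> s \<le> \<phi> r / 2"
proof -
  obtain d where "0 < d" and d: "\<And>s. s \<in> {0..} \<Longrightarrow> dist s r < d \<Longrightarrow> dist (\<phi> s) (\<phi> r) < - \<phi> r / 2"
    using assms(1-3) unfolding continuous_on_iff
    by (metis atLeast_iff divide_pos_pos neg_0_less_iff_less zero_less_numeral)
  define r1 where "r1 = (if r + d/2 = a then r + d/4 else r + d/2)"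
  define \<eta> where "\<eta> = min (d/8) (a/2)"
  have r1: "r + d/4 \<le> r1" "r1 \<le> r + d/2" "r1 \<noteq> a"
    unfolding r1_def using \<open>0 < d\<close> by auto
  show thesis
  proof
    show "0 < \<eta>" "\<eta> < a" "\<eta> < r1" "r1 \<noteq> a"
      unfolding \<eta>_def using r1 assms(2,4) \<open>0 < d\<close> by auto
    fix s
    assume "s \<in> {r1 - \<eta>..r1 + \<eta>}"
    moreover have "\<eta> \<le> d/8"
      unfolding \<eta>_def by auto
    ultimately have "dist (\<phi> s) (\<phi> r) < - \<phi> r / 2"
      using r1 assms(2) \<open>0 < d\<close> by (intro d) (auto simp: dist_real_def)
    then show "\<phi> s \<le> \<phi> r / 2"
      by (auto simp: dist_real_def)
  qed
qed

lemma continuous_on_derivative_of_smooth_nonneg: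
  assumes "smooth_nonneg f"
    and "\<And>x. 0 \<le> x \<Longrightarrow> (f has_real_derivative f' x) (at x within {0..})"
  shows "continuous_on {0..} f'"
proof -
  obtain D where "D 0 = f"
    and D: "\<And>k x. 0 \<le> x \<Longrightarrow> (D k has_real_derivative D (Suc k) x) (at x within {0..})"
    using assms(1) unfolding smooth_nonneg_def by blast
  have "f' x = D 1 x" if "0 \<le> x" for x
  proof (rule has_field_derivative_unique)
    show "(f has_real_derivative f' x) (at x within {0..})"
      using assms(2) that .
    show "(f has_real_derivative D 1 x) (at x within {0..})"
      using D[OF that, of 0] \<open>D 0 = f\<close> by simp
    have "at x within {x..} \<le> at x within {0..}"
      using that by (intro at_le) auto
    then show "at x within {0..} \<noteq> bot"
      using trivial_limit_at_right_real at_within_Ici_at_right by (metis bot.extremum_uniqueI)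
  qed
  moreover have "continuous_on {0..} (D 1)"
    unfolding continuous_on_eq_continuous_within using D DERIV_continuous by blast
  ultimately show ?thesis
    using continuous_on_eq[of "{0..}" "D 1" f'] by auto
qed

lemma continuous_on_compose_power2:
  "continuous_on {0..} f \<Longrightarrow> continuous_on UNIV (\<lambda>s::real. f (s\<^sup>2))"
  by (erule continuous_on_compose2[OF _ continuous_on_power[OF continuous_on_id]]) auto

lemma continuous_on_Icc_bounded:
  fixes f :: "real \<Rightarrow> real"
  assumes "continuous_on UNIV f"
  obtains B where "\<And>s. s \<in> {a..b} \<Longrightarrow> \<bar>f s\<bar> \<le> B"
  using continuous_on_compact_bound[OF compact_Icc[of a b] continuous_on_subset[OF assms subset_UNIV]]
    that
  by auto

lemma filterlim_affine_at_bot: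
  fixes b :: real and f :: "nat \<Rightarrow> real"
  assumes "b < 0" and "\<And>n. real n \<le> f n"
  shows "filterlim (\<lambda>n. a + b * f n) at_bot sequentially"
proof -
  have "filterlim f at_top sequentially"
    using filterlim_at_top_mono[OF filterlim_real_sequentially] assms(2) by simp
  then show ?thesis
    unfolding filterlim_tendsto_add_at_bot_iff[OF tendsto_const]
    by (rule filterlim_tendsto_neg_mult_at_bot[OF tendsto_const assms(1)])
qed

section \<open>The twisted plateau\<close>

definition competitor ::
    "real \<Rightarrow> real \<Rightarrow> (real \<Rightarrow> real) \<Rightarrow> (real \<Rightarrow> real) \<Rightarrow> real
      \<Rightarrow> (real \<Rightarrow> complex) \<Rightarrow> (real \<Rightarrow> complex) \<Rightarrow> (real \<Rightarrow> real) \<Rightarrow> bool" where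
  "competitor r0 \<kappa> F h p v w g \<longleftrightarrow>
     in_X r0 v w \<and> H1loc_deriv (\<lambda>x. h ((cmod (v x))\<^sup>2)) g \<and> (\<exists>\<delta>>0. \<forall>x. \<delta> \<le> cmod (v x))
     \<and> integrable lborel (P_dens r0 v w) \<and> P_mom r0 v w = p
     \<and> integrable lborel (E_dens \<kappa> F v w g)"

locale twisted_plateau =
  fixes r0 r1 \<epsilon> T m c :: real
  assumes \<epsilon>_nonneg: "0 \<le> \<epsilon>" and \<epsilon>_less: "\<epsilon> < r0" "\<epsilon> < r1"
    and T_pos: "0 < T" and m_pos: "0 < m"
    and sin_mT: "sin (m * T) = 0" and cos_mT: "cos (m * T) = 1"
begin

definition ramp :: "real \<Rightarrow> real" where
  "ramp x = clamp 0 1 (x + 1) - clamp 0 1 (x - T)"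

definition \<rho> :: "real \<Rightarrow> real" where
  "\<rho> x = r0 + (r1 - r0) * ramp x + \<epsilon> * sin (m * clamp 0 T x)"

definition \<rho>' :: "real \<Rightarrow> real" where
  "\<rho>' x = (r1 - r0) * (indicator {-1<..<0} x - indicator {T<..<T+1} x)
     + \<epsilon> * m * cos (m * clamp 0 T x) * indicator {0<..<T} x"

definition \<theta> :: "real \<Rightarrow> real" where
  "\<theta> x = c * clamp 0 T x"

definition \<theta>' :: "real \<Rightarrow> real" where
  "\<theta>' x = c * indicator {0<..<T} x"

definition v :: "real \<Rightarrow> complex" where
  "v x = rcis (\<rho> x) (\<theta> x)"

definition w :: "real \<Rightarrow> complex" where
  "w x = Complex (\<rho>' x) (\<rho> x * \<theta>' x) * cis (\<theta> x)"

lemma clamp_0_T: "clamp 0 T x = max 0 (min T x)"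
  using T_pos by (simp add: clamp_real)

lemma ramp_bounds: "0 \<le> ramp x" "ramp x \<le> 1"
  using T_pos by (auto simp: ramp_def clamp_real)

lemma \<rho>_outside: "x \<notin> {0<..<T} \<Longrightarrow> \<rho> x = r0 + (r1 - r0) * ramp x"
  using T_pos sin_mT by (auto simp: \<rho>_def clamp_0_T)

lemma \<rho>_inside: "x \<in> {0..T} \<Longrightarrow> \<rho> x = r1 + \<epsilon> * sin (m * x)"
  using T_pos by (auto simp: \<rho>_def ramp_def clamp_real)

lemma \<rho>_far: "x \<notin> {-1..T+1} \<Longrightarrow> \<rho> x = r0"
  using T_pos sin_mT by (auto simp: \<rho>_def ramp_def clamp_real)

lemma \<rho>'_inside: "x \<in> {0<..<T} \<Longrightarrow> \<rho>' x = \<epsilon> * m * cos (m * x)"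
  using T_pos by (auto simp: \<rho>'_def clamp_0_T)

lemma \<rho>'_outside_sq: "x \<notin> {0<..<T} \<Longrightarrow> (\<rho>' x)\<^sup>2 \<le> (r1 - r0)\<^sup>2"
  using T_pos by (auto simp: \<rho>'_def indicator_def power2_commute)

lemma \<rho>'_far: "x \<notin> {-1..T+1} \<Longrightarrow> \<rho>' x = 0"
  using T_pos by (auto simp: \<rho>'_def)

lemma \<theta>'_inside: "x \<in> {0<..<T} \<Longrightarrow> \<theta>' x = c"
  by (simp add: \<theta>'_def)

lemma \<theta>'_outside: "x \<notin> {0<..<T} \<Longrightarrow> \<theta>' x = 0"
  by (simp add: \<theta>'_def)

lemma \<theta>'_far: "x \<notin> {-1..T+1} \<Longrightarrow> \<theta>' x = 0"
  by (auto simp: \<theta>'_def indicator_def)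

lemma \<rho>_between: "x \<notin> {0<..<T} \<Longrightarrow> \<rho> x \<in> {min r0 r1..max r0 r1}"
  using ramp_bounds[of x] \<rho>_outside[of x]
  by (smt (verit, best) atLeastAtMost_iff left_diff_distrib' mult_left_le mult_nonneg_nonneg)

lemma \<rho>_inside_range: "x \<in> {0<..<T} \<Longrightarrow> \<rho> x \<in> {r1 - \<epsilon>..r1 + \<epsilon>}"
proof -
  assume "x \<in> {0<..<T}"
  moreover have "\<bar>\<epsilon> * sin (m * x)\<bar> \<le> \<epsilon>"
    using mult_left_le[OF abs_sin_le_one[of "m * x"] \<epsilon>_nonneg] \<epsilon>_nonneg by (simp add: abs_mult)
  ultimately show ?thesis
    using \<rho>_inside[of x] by (auto simp: abs_le_iff)
qed

lemma \<rho>_range: "\<rho> x \<in> {min r0 r1 - \<epsilon>..max r0 r1 + \<epsilon>}"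
  using \<rho>_inside_range[of x] \<rho>_between[of x] \<epsilon>_nonneg
  by (cases "x \<in> {0<..<T}") auto

lemma \<rho>_min_pos: "0 < min r0 r1 - \<epsilon>"
  using \<epsilon>_less by simp

lemma \<rho>_pos: "0 < \<rho> x"
  using \<rho>_range[of x] \<rho>_min_pos by auto

lemma \<rho>'_bound: "\<bar>\<rho>' x\<bar> \<le> 2 * \<bar>r1 - r0\<bar> + \<epsilon> * m"
proof -
  have "\<bar>\<epsilon> * m * cos (m * clamp 0 T x) * indicator {0<..<T} x\<bar> \<le> \<epsilon> * m"
    using \<epsilon>_nonneg m_pos abs_cos_le_one[of "m * clamp 0 T x"]
    by (auto simp: indicator_def abs_mult intro: mult_left_le)
  moreover have "\<bar>(r1 - r0) * (indicator {-1<..<0} x - indicator {T<..<T+1} x)\<bar> \<le> 2 * \<bar>r1 - r0\<bar>"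
    by (auto simp: indicator_def abs_mult)
  ultimately show ?thesis
    unfolding \<rho>'_def by linarith
qed

lemma \<theta>'_bound: "\<bar>\<theta>' x\<bar> \<le> \<bar>c\<bar>"
  by (simp add: \<theta>'_def indicator_def)

definition kinks :: "real set" where
  "kinks = {-1, 0, T, T+1}"

lemma finite_kinks: "finite kinks"
  by (simp add: kinks_def)

lemma continuous_\<rho>: "continuous_on UNIV \<rho>"
  unfolding \<rho>_def ramp_def by (intro continuous_intros)

lemma continuous_\<theta>: "continuous_on UNIV \<theta>"
  unfolding \<theta>_def by (intro continuous_intros)

lemma \<rho>_has_derivative: "x \<notin> kinks \<Longrightarrow> (\<rho> has_real_derivative \<rho>' x) (at x)"
  unfolding \<rho>_def ramp_def using T_pos
  by (auto intro!: derivative_eq_intros simp: kinks_def \<rho>'_def indicator_def algebra_simps)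

lemma \<theta>_has_derivative: "x \<notin> kinks \<Longrightarrow> (\<theta> has_real_derivative \<theta>' x) (at x)"
  unfolding \<theta>_def using T_pos
  by (auto intro!: derivative_eq_intros simp: kinks_def \<theta>'_def)

lemma measurable_\<rho> [measurable]: "\<rho> \<in> borel_measurable borel"
  by (rule borel_measurable_continuous_onI[OF continuous_\<rho>])

lemma measurable_\<rho>' [measurable]: "\<rho>' \<in> borel_measurable borel"
  unfolding \<rho>'_def clamp_0_T by measurable

lemma measurable_\<theta>' [measurable]: "\<theta>' \<in> borel_measurable borel"
  unfolding \<theta>'_def by measurable

lemma cmod_v: "cmod (v x) = \<rho> x"
  using \<rho>_pos[of x] by (simp add: v_def)

lemma cmod_w_sq: "(cmod (w x))\<^sup>2 = (\<rho>' x)\<^sup>2 + (\<rho> x * \<theta>' x)\<^sup>2"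
  by (simp add: w_def norm_mult cmod_power2)

lemma v_has_derivative: "x \<notin> kinks \<Longrightarrow> (v has_vector_derivative w x) (at x)"
  unfolding v_def rcis_def w_def has_vector_derivative_def
  by (auto intro!: derivative_eq_intros \<rho>_has_derivative[unfolded has_field_derivative_def]
      \<theta>_has_derivative[unfolded has_field_derivative_def] simp: complex_eq_iff algebra_simps)

lemma norm_w_le: "cmod (w x) \<le> (2 * \<bar>r1 - r0\<bar> + \<epsilon> * m) + (max r0 r1 + \<epsilon>) * \<bar>c\<bar>"
proof -
  have "cmod (w x) \<le> \<bar>\<rho>' x\<bar> + \<bar>\<rho> x * \<theta>' x\<bar>"
    using cmod_le[of "Complex (\<rho>' x) (\<rho> x * \<theta>' x)"] by (simp add: w_def norm_mult)
  moreover have "\<bar>\<rho> x * \<theta>' x\<bar> \<le> (max r0 r1 + \<epsilon>) * \<bar>c\<bar>"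
    unfolding abs_mult using \<rho>_pos[of x] \<rho>_range[of x] \<theta>'_bound[of x]
    by (intro mult_mono) auto
  ultimately show ?thesis
    using \<rho>'_bound[of x] by linarith
qed

lemma continuous_v: "continuous_on UNIV v"
  unfolding v_def by (intro continuous_intros continuous_\<rho> continuous_\<theta>)

lemma measurable_v [measurable]: "v \<in> borel_measurable borel"
  by (rule borel_measurable_continuous_onI[OF continuous_v])

lemma measurable_w [measurable]: "w \<in> borel_measurable borel"
proof -
  have [measurable]: "(\<lambda>x. cis (\<theta> x)) \<in> borel_measurable borel"
    by (intro borel_measurable_continuous_onI continuous_intros continuous_\<theta>)
  show ?thesis
    unfolding w_def Complex_eq by measurable
qed

lemma H1loc_deriv_v: "H1loc_deriv v w"
  by (rule H1loc_deriv_piecewise_C1[OF finite_kinks continuous_v v_has_derivative measurable_w norm_w_le])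

lemma in_X_v: "in_X r0 v w"
  unfolding in_X_def
proof (intro conjI H1loc_deriv_v)
  define B where "B = (2 * \<bar>r1 - r0\<bar> + \<epsilon> * m) + (max r0 r1 + \<epsilon>) * \<bar>c\<bar>"
  show "integrable lborel (\<lambda>x. (cmod (w x))\<^sup>2)"
  proof (rule integrable_bounded_Icc_support[where a="-1" and b="T+1" and B="B\<^sup>2"])
    show "\<bar>(cmod (w x))\<^sup>2\<bar> \<le> B\<^sup>2" for x
      using norm_w_le[of x] unfolding B_def by (simp add: power_mono)
    show "(cmod (w x))\<^sup>2 = 0" if "x \<notin> {-1..T+1}" for x
      using that by (simp add: cmod_w_sq \<rho>'_far \<theta>'_far)
  qed measurable
  show "(\<lambda>x. (cmod (v x))\<^sup>2 - r0\<^sup>2) \<in> borel_measurable lborel"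
    by measurable
  show "integrable lborel (\<lambda>x. ((cmod (v x))\<^sup>2 - r0\<^sup>2)\<^sup>2)"
  proof (rule integrable_bounded_Icc_support[where a="-1" and b="T+1"])
    show "\<bar>((cmod (v x))\<^sup>2 - r0\<^sup>2)\<^sup>2\<bar> \<le> ((max r0 r1 + \<epsilon>)\<^sup>2 + r0\<^sup>2)\<^sup>2" for x
    proof -
      have "(\<rho> x)\<^sup>2 \<le> (max r0 r1 + \<epsilon>)\<^sup>2"
        using \<rho>_pos[of x] \<rho>_range[of x] by (intro power_mono) auto
      then have "\<bar>(\<rho> x)\<^sup>2 - r0\<^sup>2\<bar> \<le> (max r0 r1 + \<epsilon>)\<^sup>2 + r0\<^sup>2"
        unfolding abs_le_iff using zero_le_power2[of r0] zero_le_power2[of "\<rho> x"] by linarith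
      then show ?thesis
        unfolding cmod_v by (metis abs_ge_zero abs_power2 power2_abs power_mono)
    qed
    show "((cmod (v x))\<^sup>2 - r0\<^sup>2)\<^sup>2 = 0" if "x \<notin> {-1..T+1}" for x
      using that by (simp add: cmod_v \<rho>_far)
  qed measurable
qed

lemma v_bounded_away_from_0: "\<exists>\<delta>>0. \<forall>x. \<delta> \<le> cmod (v x)"
  using \<rho>_min_pos \<rho>_range by (intro exI[of _ "min r0 r1 - \<epsilon>"]) (auto simp: cmod_v)

lemma P_dens_eq: "P_dens r0 v w x = - \<theta>' x * ((\<rho> x)\<^sup>2 - r0\<^sup>2)"
proof -
  have "\<i> * w x * cnj (v x) = \<i> * Complex (\<rho>' x) (\<rho> x * \<theta>' x) * \<rho> x * (cis (\<theta> x) * cnj (cis (\<theta> x)))"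
    by (simp add: v_def w_def rcis_def mult_ac)
  also have "\<dots> = \<rho> x * Complex (- \<rho> x * \<theta>' x) (\<rho>' x)"
    by (simp add: cis_cnj cis_mult complex_eq_iff)
  finally have "\<i> * w x * cnj (v x) = \<rho> x * Complex (- \<rho> x * \<theta>' x) (\<rho>' x)" .
  then show ?thesis
    using \<rho>_pos[of x] by (simp add: P_dens_def cmod_v field_simps power2_eq_square)
qed

lemma P_dens_trig: "P_dens r0 v w x = indicator {0<..<T} x *
    (- c * (r1\<^sup>2 - r0\<^sup>2) + (- 2 * c * r1 * \<epsilon>) * sin (m * x) + (- c * \<epsilon>\<^sup>2) * (sin (m * x))\<^sup>2)"
  by (cases "x \<in> {0<..<T}")
     (simp_all add: P_dens_eq \<theta>'_inside \<rho>_inside \<theta>'_outside power2_sum power_mult_distrib algebra_simps)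

lemma integrable_P_dens: "integrable lborel (P_dens r0 v w)"
  unfolding P_dens_trig[abs_def]
  by (rule integral_trig_polynomial_over_period(1)[OF m_pos less_imp_le[OF T_pos] sin_mT cos_mT])

lemma P_mom_eq: "P_mom r0 v w = - c * T * (r1\<^sup>2 - r0\<^sup>2 + \<epsilon>\<^sup>2 / 2)"
  unfolding P_mom_def P_dens_trig
    integral_trig_polynomial_over_period(2)[OF m_pos less_imp_le[OF T_pos] sin_mT cos_mT]
  by (simp add: algebra_simps)

end

section \<open>Energy of the twisted plateau\<close>

locale energy_functional =
  fixes r0 \<kappa> :: real and F h h' :: "real \<Rightarrow> real"
  assumes r0_pos: "0 < r0"
    and continuous_F: "continuous_on {0..} F"
    and continuous_h: "continuous_on {0..} h"
    and continuous_h': "continuous_on {0..} h'"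
    and h_has_derivative: "\<And>y. 0 < y \<Longrightarrow> (h has_real_derivative h' y) (at y)"
    and F_r0: "F (r0\<^sup>2) = 0"
begin

definition grad_coeff :: "real \<Rightarrow> real" where
  "grad_coeff s = 1 + 2 * \<kappa> * s\<^sup>2 * (h' (s\<^sup>2))\<^sup>2"

lemma continuous_grad_coeff: "continuous_on UNIV grad_coeff"
  unfolding grad_coeff_def[abs_def]
  by (intro continuous_intros continuous_on_compose_power2 continuous_h')

end

locale twisted_plateau_energy = energy_functional + twisted_plateau
begin

definition g :: "real \<Rightarrow> real" where
  "g x = 2 * \<rho> x * \<rho>' x * h' ((\<rho> x)\<^sup>2)"

lemma continuous_compose_\<rho>_sq:
  "continuous_on {0..} f \<Longrightarrow> continuous_on UNIV (\<lambda>x. f ((\<rho> x)\<^sup>2))"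
  by (erule continuous_on_compose2[OF _ continuous_on_power[OF continuous_\<rho>]]) auto

lemma measurable_compose_\<rho>_sq:
  "continuous_on {0..} f \<Longrightarrow> (\<lambda>x. f ((\<rho> x)\<^sup>2)) \<in> borel_measurable borel"
  by (rule borel_measurable_continuous_onI[OF continuous_compose_\<rho>_sq])

lemma bounded_on_\<rho>_range:
  fixes f :: "real \<Rightarrow> real"
  assumes "continuous_on UNIV f"
  obtains B where "\<And>x. \<bar>f (\<rho> x)\<bar> \<le> B"
proof -
  obtain B where "\<And>s. s \<in> {min r0 r1 - \<epsilon>..max r0 r1 + \<epsilon>} \<Longrightarrow> \<bar>f s\<bar> \<le> B"
    using continuous_on_Icc_bounded[OF assms] by blast
  then show thesis
    using that \<rho>_range by blast
qed

lemma H1loc_deriv_g: "H1loc_deriv (\<lambda>x. h ((cmod (v x))\<^sup>2)) g"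
proof -
  obtain H where H: "\<And>x. \<bar>h' ((\<rho> x)\<^sup>2)\<bar> \<le> H"
    using bounded_on_\<rho>_range[OF continuous_on_compose_power2[OF continuous_h']] by blast
  have "H1loc_deriv (\<lambda>x. h ((\<rho> x)\<^sup>2)) g"
  proof (rule H1loc_deriv_piecewise_C1[OF finite_kinks continuous_compose_\<rho>_sq[OF continuous_h]])
    show "((\<lambda>x. h ((\<rho> x)\<^sup>2)) has_vector_derivative g x) (at x)" if "x \<notin> kinks" for x
    proof -
      have "((\<lambda>x. (\<rho> x)\<^sup>2) has_real_derivative 2 * \<rho> x * \<rho>' x) (at x)"
        by (auto intro!: derivative_eq_intros \<rho>_has_derivative that)
      from DERIV_chain2[OF h_has_derivative this] show ?thesis
        using \<rho>_pos[of x]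
        by (simp add: g_def has_real_derivative_iff_has_vector_derivative algebra_simps)
    qed
    show "g \<in> borel_measurable borel"
      unfolding g_def using measurable_compose_\<rho>_sq[OF continuous_h'] by measurable
    show "norm (g x) \<le> 2 * (max r0 r1 + \<epsilon>) * (2 * \<bar>r1 - r0\<bar> + \<epsilon> * m) * H" for x
      unfolding g_def real_norm_def abs_mult
      using \<rho>_pos[of x] \<rho>_range[of x] \<rho>'_bound[of x] H[of x]
      by (intro mult_mono) auto
  qed
  then show ?thesis
    by (simp add: cmod_v)
qed

lemma E_dens_eq:
  "E_dens \<kappa> F v w g x = (\<rho>' x)\<^sup>2 * grad_coeff (\<rho> x) + (\<rho> x * \<theta>' x)\<^sup>2 + F ((\<rho> x)\<^sup>2)"
  unfolding E_dens_def cmod_w_sq cmod_v g_def grad_coeff_def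
  by (simp add: algebra_simps power2_eq_square)

lemma E_dens_far: "x \<notin> {-1..T+1} \<Longrightarrow> E_dens \<kappa> F v w g x = 0"
  by (simp add: E_dens_eq \<rho>_far \<rho>'_far \<theta>'_far F_r0)

lemma integrable_E_dens: "integrable lborel (E_dens \<kappa> F v w g)"
proof -
  obtain G where G: "\<And>x. \<bar>grad_coeff (\<rho> x)\<bar> \<le> G"
    using bounded_on_\<rho>_range[OF continuous_grad_coeff] by blast
  obtain \<Phi> where \<Phi>: "\<And>x. \<bar>F ((\<rho> x)\<^sup>2)\<bar> \<le> \<Phi>"
    using bounded_on_\<rho>_range[OF continuous_on_compose_power2[OF continuous_F]] by blast
  define R where "R = 2 * \<bar>r1 - r0\<bar> + \<epsilon> * m"
  show ?thesis
  proof (rule integrable_bounded_Icc_support[where a="-1" and b="T+1"])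
    show "E_dens \<kappa> F v w g \<in> borel_measurable borel"
      unfolding E_dens_eq[abs_def]
      using measurable_compose_\<rho>_sq[OF continuous_F]
        borel_measurable_continuous_onI[OF continuous_on_compose2[OF continuous_grad_coeff continuous_\<rho>]]
      by measurable
    show "\<bar>E_dens \<kappa> F v w g x\<bar> \<le> R\<^sup>2 * G + ((max r0 r1 + \<epsilon>) * \<bar>c\<bar>)\<^sup>2 + \<Phi>" for x
    proof -
      have "(\<rho>' x)\<^sup>2 \<le> R\<^sup>2"
        unfolding R_def using \<rho>'_bound[of x] by (metis abs_ge_zero power2_abs power_mono)
      then have "\<bar>(\<rho>' x)\<^sup>2 * grad_coeff (\<rho> x)\<bar> \<le> R\<^sup>2 * G"
        unfolding abs_mult using G[of x] by (intro mult_mono) auto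
      moreover have "\<bar>\<rho> x * \<theta>' x\<bar> \<le> (max r0 r1 + \<epsilon>) * \<bar>c\<bar>"
        unfolding abs_mult using \<rho>_pos[of x] \<rho>_range[of x] \<theta>'_bound[of x] by (intro mult_mono) auto
      then have "(\<rho> x * \<theta>' x)\<^sup>2 \<le> ((max r0 r1 + \<epsilon>) * \<bar>c\<bar>)\<^sup>2"
        by (metis abs_ge_zero power2_abs power_mono)
      ultimately show ?thesis
        unfolding E_dens_eq
        using \<Phi>[of x] zero_le_power2[of "\<rho> x * \<theta>' x"] zero_le_power2[of "(max r0 r1 + \<epsilon>) * \<bar>c\<bar>"]
        by (simp only: abs_le_iff) linarith
    qed
  qed (rule E_dens_far)
qed

lemma E_dens_le_outside:
  assumes K: "\<And>s. s \<in> {min r0 r1..max r0 r1} \<Longrightarrow> (r1 - r0)\<^sup>2 * \<bar>grad_coeff s\<bar> + \<bar>F (s\<^sup>2)\<bar> \<le> K"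
    and "x \<notin> {0<..<T}"
  shows "E_dens \<kappa> F v w g x \<le> K * indicator {-1..T+1} x"
proof (cases "x \<in> {-1..T+1}")
  case True
  have "(\<rho>' x)\<^sup>2 * grad_coeff (\<rho> x) \<le> (\<rho>' x)\<^sup>2 * \<bar>grad_coeff (\<rho> x)\<bar>"
    by (intro mult_left_mono) auto
  also have "\<dots> \<le> (r1 - r0)\<^sup>2 * \<bar>grad_coeff (\<rho> x)\<bar>"
    using \<rho>'_outside_sq[OF assms(2)] by (intro mult_right_mono) auto
  finally have "(\<rho>' x)\<^sup>2 * grad_coeff (\<rho> x) \<le> (r1 - r0)\<^sup>2 * \<bar>grad_coeff (\<rho> x)\<bar>" .
  then show ?thesis
    using True K[OF \<rho>_between[OF assms(2)]]
    by (simp add: E_dens_eq \<theta>'_outside[OF assms(2)])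
next
  case False
  then show ?thesis
    by (simp add: E_dens_far)
qed

lemma E_dens_le_inside:
  assumes "\<And>s. s \<in> {r1 - \<epsilon>..r1 + \<epsilon>} \<Longrightarrow> grad_coeff s \<le> - \<delta> \<and> s\<^sup>2 * c\<^sup>2 + F (s\<^sup>2) \<le> M"
    and "x \<in> {0<..<T}"
  shows "E_dens \<kappa> F v w g x \<le> (M - \<delta> * \<epsilon>\<^sup>2 * m\<^sup>2) + \<delta> * \<epsilon>\<^sup>2 * m\<^sup>2 * (sin (m * x))\<^sup>2"
proof -
  have "grad_coeff (\<rho> x) \<le> - \<delta>" and M: "(\<rho> x)\<^sup>2 * c\<^sup>2 + F ((\<rho> x)\<^sup>2) \<le> M"
    using assms(1)[OF \<rho>_inside_range[OF assms(2)]] by auto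
  then have "(\<rho>' x)\<^sup>2 * grad_coeff (\<rho> x) \<le> (\<rho>' x)\<^sup>2 * (- \<delta>)"
    by (intro mult_left_mono) auto
  also have "\<dots> = - \<delta> * \<epsilon>\<^sup>2 * m\<^sup>2 + \<delta> * \<epsilon>\<^sup>2 * m\<^sup>2 * (sin (m * x))\<^sup>2"
    using \<rho>'_inside[OF assms(2)] by (simp add: power_mult_distrib cos_squared_eq algebra_simps)
  finally show ?thesis
    using M unfolding E_dens_eq \<theta>'_inside[OF assms(2)] power_mult_distrib by linarith
qed

lemma E_kappa_le:
  assumes K: "\<And>s. s \<in> {min r0 r1..max r0 r1} \<Longrightarrow> (r1 - r0)\<^sup>2 * \<bar>grad_coeff s\<bar> + \<bar>F (s\<^sup>2)\<bar> \<le> K"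
    and inner: "\<And>s. s \<in> {r1 - \<epsilon>..r1 + \<epsilon>} \<Longrightarrow> grad_coeff s \<le> - \<delta> \<and> s\<^sup>2 * c\<^sup>2 + F (s\<^sup>2) \<le> M"
  shows "E_kappa \<kappa> F v w g \<le> 2 * K + T * M - \<delta> * \<epsilon>\<^sup>2 * m\<^sup>2 * T / 2"
proof -
  define a d where "a = M - \<delta> * \<epsilon>\<^sup>2 * m\<^sup>2" and "d = \<delta> * \<epsilon>\<^sup>2 * m\<^sup>2"
  define q where "q x = indicator {0<..<T} x * (a + 0 * sin (m * x) + d * (sin (m * x))\<^sup>2)" for x
  define I1 I2 where "I1 x = K * indicator {-1..T+1} x" and "I2 x = K * indicator {0<..<T} x" for x :: real
  note trig = integral_trig_polynomial_over_period[OF m_pos less_imp_le[OF T_pos] sin_mT cos_mT, of a 0 d]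
  have q: "integrable lborel q" "(LINT x|lborel. q x) = a * T + d * T / 2"
    unfolding q_def[abs_def] by (rule trig)+
  have I: "integrable lborel I1" "integrable lborel I2"
    "(LINT x|lborel. I1 x) = K * (T + 2)" "(LINT x|lborel. I2 x) = K * T"
    using T_pos by (simp_all add: I1_def[abs_def] I2_def[abs_def] emeasure_lborel_Icc_eq)
  have "E_dens \<kappa> F v w g x \<le> I1 x - I2 x + q x" for x
  proof (cases "x \<in> {0<..<T}")
    case True
    then show ?thesis
      using E_dens_le_inside[OF inner True] T_pos by (simp add: I1_def I2_def q_def a_def d_def)
  next
    case False
    then show ?thesis
      using E_dens_le_outside[OF K False] by (simp add: I1_def I2_def q_def)
  qed
  moreover have "integrable lborel (\<lambda>x. I1 x - I2 x + q x)"
    using q I by (intro Bochner_Integration.integrable_add Bochner_Integration.integrable_diff)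
  ultimately have "E_kappa \<kappa> F v w g \<le> (LINT x|lborel. I1 x - I2 x + q x)"
    unfolding E_kappa_def using integrable_E_dens by (intro integral_mono)
  also have "\<dots> = K * (T + 2) - K * T + (a * T + d * T / 2)"
    using q I by simp
  also have "\<dots> = 2 * K + T * M - \<delta> * \<epsilon>\<^sup>2 * m\<^sup>2 * T / 2"
    by (simp add: a_def d_def algebra_simps)
  finally show ?thesis .
qed

lemma competitor_v: "competitor r0 \<kappa> F h (- c * T * (r1\<^sup>2 - r0\<^sup>2 + \<epsilon>\<^sup>2 / 2)) v w g"
  unfolding competitor_def
  using in_X_v H1loc_deriv_g v_bounded_away_from_0 integrable_P_dens P_mom_eq integrable_E_dens
  by blast

end

section \<open>Energy unbounded below at fixed momentum\<close>

lemma competitor_sequence_at_bot: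
  assumes "\<And>n. \<exists>v w g. competitor r0 \<kappa> F h p v w g \<and> E_kappa \<kappa> F v w g \<le> B n"
    and "filterlim B at_bot sequentially"
  shows "\<exists>v w g. (\<forall>n. competitor r0 \<kappa> F h p (v n) (w n) (g n))
           \<and> filterlim (\<lambda>n. E_kappa \<kappa> F (v n) (w n) (g n)) at_bot sequentially"
proof -
  have "\<forall>n. \<exists>v w g. competitor r0 \<kappa> F h p v w g \<and> E_kappa \<kappa> F v w g \<le> B n"
    by (intro allI assms(1))
  from choice[OF this] obtain v
    where "\<forall>n. \<exists>w g. competitor r0 \<kappa> F h p (v n) w g \<and> E_kappa \<kappa> F (v n) w g \<le> B n" ..
  from choice[OF this] obtain w
    where "\<forall>n. \<exists>g. competitor r0 \<kappa> F h p (v n) (w n) g \<and> E_kappa \<kappa> F (v n) (w n) g \<le> B n" ..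
  from choice[OF this] obtain g
    where "\<forall>n. competitor r0 \<kappa> F h p (v n) (w n) (g n) \<and> E_kappa \<kappa> F (v n) (w n) (g n) \<le> B n" ..
  then have vwg: "\<forall>n. competitor r0 \<kappa> F h p (v n) (w n) (g n)"
    and bound: "\<And>n. E_kappa \<kappa> F (v n) (w n) (g n) \<le> B n"
    by auto
  have "filterlim (\<lambda>n. E_kappa \<kappa> F (v n) (w n) (g n)) at_bot sequentially"
    unfolding filterlim_at_bot
  proof
    fix Z :: real
    have "eventually (\<lambda>n. B n \<le> Z) sequentially"
      using assms(2) by (simp add: filterlim_at_bot)
    then show "eventually (\<lambda>n. E_kappa \<kappa> F (v n) (w n) (g n) \<le> Z) sequentially"
      by (rule eventually_mono) (use bound order_trans in metis)
  qed
  then show ?thesis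
    using vwg by blast
qed

context energy_functional
begin

lemma twisted_plateau_competitor:
  assumes "twisted_plateau r0 r1 \<epsilon> T m" and "c * T * (r1\<^sup>2 - r0\<^sup>2 + \<epsilon>\<^sup>2 / 2) = - p"
    and "\<And>s. s \<in> {min r0 r1..max r0 r1} \<Longrightarrow> (r1 - r0)\<^sup>2 * \<bar>grad_coeff s\<bar> + \<bar>F (s\<^sup>2)\<bar> \<le> K"
    and "\<And>s. s \<in> {r1 - \<epsilon>..r1 + \<epsilon>} \<Longrightarrow> grad_coeff s \<le> - \<delta> \<and> s\<^sup>2 * c\<^sup>2 + F (s\<^sup>2) \<le> M"
  shows "\<exists>v w g. competitor r0 \<kappa> F h p v w g
           \<and> E_kappa \<kappa> F v w g \<le> 2 * K + T * M - \<delta> * \<epsilon>\<^sup>2 * m\<^sup>2 * T / 2"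
proof -
  interpret twisted_plateau_energy r0 \<kappa> F h h' r1 \<epsilon> T m c
    by (intro twisted_plateau_energy.intro energy_functional_axioms assms(1))
  have "- c * T * (r1\<^sup>2 - r0\<^sup>2 + \<epsilon>\<^sup>2 / 2) = p"
    using assms(2) by simp
  then show ?thesis
    using competitor_v E_kappa_le[OF assms(3,4)] by (intro exI[of _ v] exI[of _ w] exI[of _ g]) simp
qed

lemma transition_cost_bounded:
  obtains K where "\<And>s. s \<in> {min r0 r1..max r0 r1} \<Longrightarrow> (r1 - r0)\<^sup>2 * \<bar>grad_coeff s\<bar> + \<bar>F (s\<^sup>2)\<bar> \<le> K"
proof -
  have "continuous_on UNIV (\<lambda>s. (r1 - r0)\<^sup>2 * \<bar>grad_coeff s\<bar> + \<bar>F (s\<^sup>2)\<bar>)"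
    by (intro continuous_intros continuous_grad_coeff continuous_on_compose_power2 continuous_F)
  from continuous_on_Icc_bounded[OF this, where a="min r0 r1" and b="max r0 r1"] obtain K
    where "\<And>s. s \<in> {min r0 r1..max r0 r1} \<Longrightarrow> \<bar>(r1 - r0)\<^sup>2 * \<bar>grad_coeff s\<bar> + \<bar>F (s\<^sup>2)\<bar>\<bar> \<le> K"
    by blast
  then show thesis
    by (intro that) auto
qed

lemma E_kappa_unbounded_if_F_negative:
  assumes "0 \<le> r" "F (r\<^sup>2) < 0"
  shows "\<exists>v w g. (\<forall>n. competitor r0 \<kappa> F h p (v n) (w n) (g n))
           \<and> filterlim (\<lambda>n. E_kappa \<kappa> F (v n) (w n) (g n)) at_bot sequentially"
proof -
  obtain r1 \<eta> where r1: "0 < \<eta>" "\<eta> < r1" "r1 \<noteq> r0"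
    and near: "\<And>s. s \<in> {r1 - \<eta>..r1 + \<eta>} \<Longrightarrow> F (s\<^sup>2) \<le> F (r\<^sup>2) / 2"
    using continuous_negative_near_avoiding[OF continuous_on_subset[OF
        continuous_on_compose_power2[OF continuous_F] subset_UNIV] assms r0_pos]
    by blast
  have F1: "F (r1\<^sup>2) < 0"
    using near[of r1] r1 assms(2) by auto
  define \<Delta> where "\<Delta> = r1\<^sup>2 - r0\<^sup>2"
  have "\<Delta> \<noteq> 0"
    using r1 r0_pos by (simp add: \<Delta>_def)
  obtain K where K: "\<And>s. s \<in> {min r0 r1..max r0 r1} \<Longrightarrow> (r1 - r0)\<^sup>2 * \<bar>grad_coeff s\<bar> + \<bar>F (s\<^sup>2)\<bar> \<le> K"
    using transition_cost_bounded by blast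
  define T where "T n = 2 * real (Suc n) * pi" for n
  define c where "c n = - p / (T n * \<Delta>)" for n
  define B where "B n = 2 * K + r1\<^sup>2 * p\<^sup>2 / \<Delta>\<^sup>2 + (2 * pi * F (r1\<^sup>2)) * real (Suc n)" for n
  show ?thesis
  proof (rule competitor_sequence_at_bot[where B=B])
    fix n
    have T: "1 \<le> T n"
      using pi_ge_two by (simp add: T_def) (smt (verit) mult_le_cancel_left1 of_nat_0_le_iff)
    have "sin (T n) = 0" "cos (T n) = 1"
      unfolding T_def by (rule sin_2npi, rule cos_2npi)
    then have "twisted_plateau r0 r1 0 (T n) 1"
      by unfold_locales (use r0_pos r1 T in auto)
    moreover have "c n * T n * (r1\<^sup>2 - r0\<^sup>2 + 0\<^sup>2 / 2) = - p"
      using T \<open>\<Delta> \<noteq> 0\<close> by (simp add: c_def \<Delta>_def[symmetric])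
    \<comment> \<open>with \<epsilon> = 0 the value of \<delta> is immaterial\<close>
    ultimately obtain v w g where "competitor r0 \<kappa> F h p v w g"
      and E: "E_kappa \<kappa> F v w g \<le> 2 * K + T n * (r1\<^sup>2 * (c n)\<^sup>2 + F (r1\<^sup>2))"
      using twisted_plateau_competitor[OF _ _ K, of 0 "T n" 1 "c n" p "- grad_coeff r1"
          "r1\<^sup>2 * (c n)\<^sup>2 + F (r1\<^sup>2)"]
      by auto
    moreover have "T n * (r1\<^sup>2 * (c n)\<^sup>2) \<le> r1\<^sup>2 * p\<^sup>2 / \<Delta>\<^sup>2"
    proof -
      have "T n * (r1\<^sup>2 * (c n)\<^sup>2) = r1\<^sup>2 * p\<^sup>2 / \<Delta>\<^sup>2 / T n"
        using T \<open>\<Delta> \<noteq> 0\<close> by (simp add: c_def power_divide power_mult_distrib field_simps power2_eq_square)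
      also have "\<dots> \<le> r1\<^sup>2 * p\<^sup>2 / \<Delta>\<^sup>2"
        using T divide_left_mono[of 1 "T n" "r1\<^sup>2 * p\<^sup>2 / \<Delta>\<^sup>2"] by simp
      finally show ?thesis .
    qed
    ultimately show "\<exists>v w g. competitor r0 \<kappa> F h p v w g \<and> E_kappa \<kappa> F v w g \<le> B n"
      by (intro exI[of _ v] exI[of _ w] exI[of _ g]) (auto simp: B_def T_def algebra_simps)
  next
    show "filterlim B at_bot sequentially"
      unfolding B_def using F1 by (intro filterlim_affine_at_bot) (auto simp: mult_pos_neg)
  qed
qed

lemma E_kappa_unbounded_if_grad_coeff_negative:
  assumes "0 \<le> r" "grad_coeff r < 0"
  shows "\<exists>v w g. (\<forall>n. competitor r0 \<kappa> F h p (v n) (w n) (g n))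
           \<and> filterlim (\<lambda>n. E_kappa \<kappa> F (v n) (w n) (g n)) at_bot sequentially"
proof -
  obtain r1 \<eta> where r1: "0 < \<eta>" "\<eta> < r1" "\<eta> < r0" "r1 \<noteq> r0"
    and near: "\<And>s. s \<in> {r1 - \<eta>..r1 + \<eta>} \<Longrightarrow> grad_coeff s \<le> grad_coeff r / 2"
    using continuous_negative_near_avoiding[OF continuous_on_subset[OF continuous_grad_coeff subset_UNIV]
        assms r0_pos]
    by blast
  define \<Delta> where "\<Delta> = r1\<^sup>2 - r0\<^sup>2"
  have "\<Delta> \<noteq> 0"
    using r1 r0_pos by (simp add: \<Delta>_def)
  \<comment> \<open>small enough that r1^2 - r0^2 + \<epsilon>^2/2 \<noteq> 0, so that c can be solved for\<close>
  define \<epsilon> where "\<epsilon> = min \<eta> (min 1 \<bar>\<Delta>\<bar>) / 2"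
  have \<epsilon>: "0 < \<epsilon>" "\<epsilon> \<le> \<eta> / 2" "\<epsilon> \<le> 1 / 2" "\<epsilon> \<le> \<bar>\<Delta>\<bar> / 2"
    unfolding \<epsilon>_def using r1 \<open>\<Delta> \<noteq> 0\<close> by auto
  have "\<epsilon>\<^sup>2 \<le> \<bar>\<Delta>\<bar> / 2 * (1 / 2)"
    unfolding power2_eq_square using \<epsilon> by (intro mult_mono) auto
  then have "\<bar>\<epsilon>\<^sup>2 / 2\<bar> < \<bar>\<Delta>\<bar>"
    using \<open>\<Delta> \<noteq> 0\<close> by simp
  then have D: "\<Delta> + \<epsilon>\<^sup>2 / 2 \<noteq> 0"
    by linarith
  define c where "c = - p / (2 * pi * (\<Delta> + \<epsilon>\<^sup>2 / 2))"
  have "continuous_on UNIV (\<lambda>s. s\<^sup>2 * c\<^sup>2 + F (s\<^sup>2))"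
    by (intro continuous_intros continuous_on_compose_power2 continuous_F)
  from continuous_on_Icc_bounded[OF this, where a="r1 - \<epsilon>" and b="r1 + \<epsilon>"]
  obtain M where M: "\<And>s. s \<in> {r1 - \<epsilon>..r1 + \<epsilon>} \<Longrightarrow> \<bar>s\<^sup>2 * c\<^sup>2 + F (s\<^sup>2)\<bar> \<le> M"
    by blast
  obtain K where K: "\<And>s. s \<in> {min r0 r1..max r0 r1} \<Longrightarrow> (r1 - r0)\<^sup>2 * \<bar>grad_coeff s\<bar> + \<bar>F (s\<^sup>2)\<bar> \<le> K"
    using transition_cost_bounded by blast
  define \<delta> where "\<delta> = - grad_coeff r / 2"
  define B where "B n = 2 * K + 2 * pi * M + (- \<delta> * \<epsilon>\<^sup>2 * pi) * (real (Suc n))\<^sup>2" for n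
  show ?thesis
  proof (rule competitor_sequence_at_bot[where B=B])
    fix n
    have "sin (real (Suc n) * (2 * pi)) = 0" "cos (real (Suc n) * (2 * pi)) = 1"
      using sin_2npi[of "Suc n"] cos_2npi[of "Suc n"] by (simp_all only: mult_ac)
    then have "twisted_plateau r0 r1 \<epsilon> (2 * pi) (real (Suc n))"
      by unfold_locales (use r0_pos r1 \<epsilon> in auto)
    moreover have "c * (2 * pi) * (r1\<^sup>2 - r0\<^sup>2 + \<epsilon>\<^sup>2 / 2) = - p"
      using D by (simp add: c_def \<Delta>_def)
    moreover have "grad_coeff s \<le> - \<delta> \<and> s\<^sup>2 * c\<^sup>2 + F (s\<^sup>2) \<le> M" if "s \<in> {r1 - \<epsilon>..r1 + \<epsilon>}" for s
      using near[of s] M[OF that] that \<epsilon> by (auto simp: \<delta>_def)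
    ultimately obtain v w g where "competitor r0 \<kappa> F h p v w g"
      and "E_kappa \<kappa> F v w g \<le> 2 * K + 2 * pi * M - \<delta> * \<epsilon>\<^sup>2 * (real (Suc n))\<^sup>2 * (2 * pi) / 2"
      using twisted_plateau_competitor[OF _ _ K] by blast
    moreover have "2 * K + 2 * pi * M - \<delta> * \<epsilon>\<^sup>2 * (real (Suc n))\<^sup>2 * (2 * pi) / 2 = B n"
      by (simp add: B_def)
    ultimately show "\<exists>v w g. competitor r0 \<kappa> F h p v w g \<and> E_kappa \<kappa> F v w g \<le> B n"
      by auto
  next
    have "grad_coeff r * \<epsilon>\<^sup>2 * pi < 0"
      using assms(2) \<epsilon> by (intro mult_neg_pos) auto
    then have "0 < \<delta> * \<epsilon>\<^sup>2 * pi"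
      by (simp add: \<delta>_def)
    moreover have "real n \<le> (real (Suc n))\<^sup>2" for n
    proof -
      have "real (Suc n) \<le> (real (Suc n))\<^sup>2"
        by (rule self_le_power) auto
      then show ?thesis
        by linarith
    qed
    ultimately show "filterlim B at_bot sequentially"
      unfolding B_def by (intro filterlim_affine_at_bot) auto
  qed
qed

end

lemma energy_functional_of_smooth:
  assumes "0 < r0" and "smooth_nonneg h"
    and "\<And>x. 0 \<le> x \<Longrightarrow> (F has_real_derivative F' x) (at x within {0..})"
    and "\<And>x. 0 \<le> x \<Longrightarrow> (h has_real_derivative h' x) (at x within {0..})"
    and "F (r0\<^sup>2) = 0"
  shows "energy_functional r0 F h h'"
proof
  show "continuous_on {0..} F"
    using assms(3) by (auto simp: continuous_on_eq_continuous_within intro: DERIV_continuous)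
  show "continuous_on {0..} h"
    using assms(4) by (auto simp: continuous_on_eq_continuous_within intro: DERIV_continuous)
  show "continuous_on {0..} h'"
    by (rule continuous_on_derivative_of_smooth_nonneg[OF assms(2,4)])
  show "(h has_real_derivative h' y) (at y)" if "0 < y" for y
  proof -
    have "at y within {0..} = at y"
      using that by (intro at_within_open_subset[of y "{0<..}"]) auto
    then show ?thesis
      using assms(4)[of y] that by simp
  qed
qed (use assms in auto)

theorem propositionA1:
  fixes r0 \<kappa> :: real and F F' h h' :: "real \<Rightarrow> real"
  assumes r0: "r0 > 0"
    and F_smooth: "smooth_nonneg F" and h_smooth: "smooth_nonneg h"
    and F'_deriv: "\<And>x. 0 \<le> x \<Longrightarrow> (F has_real_derivative F' x) (at x within {0..})"
    and h'_deriv: "\<And>x. 0 \<le> x \<Longrightarrow> (h has_real_derivative h' x) (at x within {0..})"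
    and F_r0: "F (r0\<^sup>2) = 0" and F'_r0: "F' (r0\<^sup>2) = 0"
    and cases: "(\<exists>r\<ge>0. F (r\<^sup>2) < 0) \<or> (\<exists>r\<ge>0. 1 + 2 * \<kappa> * r\<^sup>2 * (h' (r\<^sup>2))\<^sup>2 < 0)"
  shows "\<forall>p::real. \<exists>(v :: nat \<Rightarrow> real \<Rightarrow> complex) (w :: nat \<Rightarrow> real \<Rightarrow> complex) (g :: nat \<Rightarrow> real \<Rightarrow> real).
     (\<forall>n. in_X r0 (v n) (w n)
        \<and> H1loc_deriv (\<lambda>x. h ((cmod (v n x))\<^sup>2)) (g n)
        \<and> (\<exists>\<delta>>0. \<forall>x. \<delta> \<le> cmod (v n x))
        \<and> integrable lborel (P_dens r0 (v n) (w n))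
        \<and> P_mom r0 (v n) (w n) = p
        \<and> integrable lborel (E_dens \<kappa> F (v n) (w n) (g n)))
     \<and> filterlim (\<lambda>n. E_kappa \<kappa> F (v n) (w n) (g n)) at_bot sequentially"
proof -
  interpret energy_functional r0 \<kappa> F h h'
    by (rule energy_functional_of_smooth[OF r0 h_smooth F'_deriv h'_deriv F_r0])
  have "\<exists>v w g. (\<forall>n. competitor r0 \<kappa> F h p (v n) (w n) (g n))
          \<and> filterlim (\<lambda>n. E_kappa \<kappa> F (v n) (w n) (g n)) at_bot sequentially" for p
    using cases E_kappa_unbounded_if_F_negative E_kappa_unbounded_if_grad_coeff_negative
    unfolding grad_coeff_def by blast
  then show ?thesis
    unfolding competitor_def by blast
qed

end
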